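(* Let $[a,b]\subset\mathbb{R}$ be a compact interval, let $m\geq1$, $r\geq2$, $n\geq0$ be integers, let $0<\alpha\leq1$, and let $\varepsilon_0>0$. For each $\varepsilon\in[0,\varepsilon_0)$ let $A_{r-j}(\cdot,\varepsilon)\in(C^{n,\alpha})^{m\times m}$ for $j=1,\dots,r$, and let $L(\varepsilon):(C^{n+r,\alpha})^{m}\to(C^{n,\alpha})^{m}$ be the continuous linear operator $L(\varepsilon)y:=y^{(r)}+\sum_{j=1}^{r}A_{r-j}(\cdot,\varepsilon)y^{(r-j)}$. Then the following three conditions are equivalent: (I) $A_{r-j}(\cdot,\varepsilon)\to A_{r-j}(\cdot,0)$ in $(C^{n,\alpha})^{m\times m}$ as $\varepsilon\to0+$ for each $j\in\{1,\dots,r\}$; (c1) $\|L(\varepsilon)-L(0)\|\to0$ as $\varepsilon\to0+$, where $\|\cdot\|$ is the operator norm for operators $(C^{n+r,\alpha})^{m}\to(C^{n,\alpha})^{m}$; (c2) $L(\varepsilon)y\to L(0)y$ in $(C^{n,\alpha})^{m}$ as $\varepsilon\to0+$ for every $y\in(C^{n+r,\alpha})^{m}$.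
   Context: $C^{n,\alpha}$ denotes the complex Hölder space of all $n$ times continuously differentiable functions $x:[a,b]\to\mathbb{C}$ with $\|x\|'_{n,\alpha}:=\sup_{a\leq t_1<t_2\leq b}|x^{(n)}(t_2)-x^{(n)}(t_1)|/|t_2-t_1|^{\alpha}<\infty$, normed by $\|x\|_{n,\alpha}:=\sum_{j=0}^{n}\max_{[a,b]}|x^{(j)}|+\|x\|'_{n,\alpha}$. $(C^{n,\alpha})^{m}$ and $(C^{n,\alpha})^{m\times m}$ are the spaces of $m$-column vector-valued and $m\times m$ matrix-valued functions with entries in $C^{n,\alpha}$, normed by the sum of the entries' norms. *)

theory Defs
  imports "HOL-Analysis.Analysis"
begin

fun hder :: "real \<Rightarrow> real \<Rightarrow> nat \<Rightarrow> (real \<Rightarrow> complex) \<Rightarrow> real \<Rightarrow> complex" where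
  "hder a b 0 x = x"
| "hder a b (Suc j) x = (\<lambda>t. vector_derivative (hder a b j x) (at t within {a..b}))"

definition hoelder_semi :: "real \<Rightarrow> real \<Rightarrow> nat \<Rightarrow> real \<Rightarrow> (real \<Rightarrow> complex) \<Rightarrow> real" where
  "hoelder_semi a b n \<alpha> x = Sup ({0} \<union>
     {cmod (hder a b n x t2 - hder a b n x t1) / \<bar>t2 - t1\<bar> powr \<alpha> | t1 t2. a \<le> t1 \<and> t1 < t2 \<and> t2 \<le> b})"

definition Hoelder :: "real \<Rightarrow> real \<Rightarrow> nat \<Rightarrow> real \<Rightarrow> (real \<Rightarrow> complex) set" where
  "Hoelder a b n \<alpha> = {x.
     (\<forall>j\<le>n. continuous_on {a..b} (hder a b j x)) \<and>
     (\<forall>j<n. \<forall>t\<in>{a..b}. (hder a b j x has_vector_derivative hder a b (Suc j) x t) (at t within {a..b})) \<and>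
     bdd_above {cmod (hder a b n x t2 - hder a b n x t1) / \<bar>t2 - t1\<bar> powr \<alpha> | t1 t2. a \<le> t1 \<and> t1 < t2 \<and> t2 \<le> b}}"

definition hnorm :: "real \<Rightarrow> real \<Rightarrow> nat \<Rightarrow> real \<Rightarrow> (real \<Rightarrow> complex) \<Rightarrow> real" where
  "hnorm a b n \<alpha> x = (\<Sum>j\<le>n. Sup ((\<lambda>t. cmod (hder a b j x t)) ` {a..b})) + hoelder_semi a b n \<alpha> x"

definition vec_Hoelder :: "real \<Rightarrow> real \<Rightarrow> nat \<Rightarrow> real \<Rightarrow> ('m::finite \<Rightarrow> real \<Rightarrow> complex) set" where
  "vec_Hoelder a b n \<alpha> = {y. \<forall>i. y i \<in> Hoelder a b n \<alpha>}"

definition vec_hnorm :: "real \<Rightarrow> real \<Rightarrow> nat \<Rightarrow> real \<Rightarrow> ('m::finite \<Rightarrow> real \<Rightarrow> complex) \<Rightarrow> real" where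
  "vec_hnorm a b n \<alpha> y = (\<Sum>i\<in>UNIV. hnorm a b n \<alpha> (y i))"

definition mat_Hoelder :: "real \<Rightarrow> real \<Rightarrow> nat \<Rightarrow> real \<Rightarrow> ('m::finite \<Rightarrow> 'm \<Rightarrow> real \<Rightarrow> complex) set" where
  "mat_Hoelder a b n \<alpha> = {A. \<forall>i k. A i k \<in> Hoelder a b n \<alpha>}"

definition mat_hnorm :: "real \<Rightarrow> real \<Rightarrow> nat \<Rightarrow> real \<Rightarrow> ('m::finite \<Rightarrow> 'm \<Rightarrow> real \<Rightarrow> complex) \<Rightarrow> real" where
  "mat_hnorm a b n \<alpha> A = (\<Sum>i\<in>UNIV. \<Sum>k\<in>UNIV. hnorm a b n \<alpha> (A i k))"

definition diff_op :: "real \<Rightarrow> real \<Rightarrow> nat \<Rightarrow> (nat \<Rightarrow> 'm::finite \<Rightarrow> 'm \<Rightarrow> real \<Rightarrow> complex)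
    \<Rightarrow> ('m \<Rightarrow> real \<Rightarrow> complex) \<Rightarrow> ('m \<Rightarrow> real \<Rightarrow> complex)" where
  "diff_op a b r Ac y = (\<lambda>i t. hder a b r (y i) t +
      (\<Sum>j\<in>{1..r}. \<Sum>k\<in>UNIV. Ac (r - j) i k t * hder a b (r - j) (y k) t))"

definition op_norm :: "real \<Rightarrow> real \<Rightarrow> nat \<Rightarrow> nat \<Rightarrow> real
    \<Rightarrow> (('m::finite \<Rightarrow> real \<Rightarrow> complex) \<Rightarrow> ('m \<Rightarrow> real \<Rightarrow> complex)) \<Rightarrow> real" where
  "op_norm a b n r \<alpha> T = Sup ({0} \<union> {vec_hnorm a b n \<alpha> (T y) / vec_hnorm a b (n + r) \<alpha> y | y.
      y \<in> vec_Hoelder a b (n + r) \<alpha> \<and> vec_hnorm a b (n + r) \<alpha> y \<noteq> 0})"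

end

(* For coefficient differences B_q = A_q(eps) - A_q(0) the operator L(eps) - L(0) is
   y |-> sum_{q<r} B_q y^(q).  Since C^{n,alpha} is closed under products with
   ||f g|| <= K ||f|| ||g||, and y |-> y^(q) maps C^{n+r,alpha} boundedly into C^{n,alpha},
   the operator norm of L(eps) - L(0) is at most a constant times sum_q ||B_q||; this gives
   (I) => (c1), and (c1) => (c2) is immediate.  For (c2) => (I), apply L(eps) - L(0) to the
   vector y = e_l (t - a)^p: the result is p! (B_p)_{.l} plus the terms
   (B_q)_{.l} p!/(p-q)! (t - a)^(p-q) with q < p, which tend to zero by induction on p. *)

theory Submission
  imports Defs
begin

text \<open>Coefficients are indexed by the order \<open>q = r - j\<close> of the derivative rather than by \<open>j\<close>
  as in \<open>diff_op\<close>; see \<open>diff_op_minus\<close>.\<close>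

definition lower_order_op :: "real \<Rightarrow> real \<Rightarrow> nat \<Rightarrow> (nat \<Rightarrow> 'm::finite \<Rightarrow> 'm \<Rightarrow> real \<Rightarrow> complex)
    \<Rightarrow> ('m \<Rightarrow> real \<Rightarrow> complex) \<Rightarrow> ('m \<Rightarrow> real \<Rightarrow> complex)" where
  "lower_order_op a b r B y = (\<lambda>i t. \<Sum>q<r. \<Sum>k\<in>UNIV. B q i k t * hder a b q (y k) t)"

lemma ball_atLeast1_atMost_diff_iff: "(\<forall>j\<in>{1..r}. P (r - j)) \<longleftrightarrow> (\<forall>q<r::nat. P q)"
proof
  assume P: "\<forall>j\<in>{1..r}. P (r - j)"
  show "\<forall>q<r. P q"
  proof (intro allI impI)
    fix q assume "q < r"
    then show "P q" using P[rule_format, of "r - q"] by auto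
  qed
qed auto

lemma sum_atLeast1_atMost_diff: "(\<Sum>j\<in>{1..r}. f (r - j)) = (\<Sum>q<r::nat. f q)"
  by (rule sum.reindex_bij_witness[of _ "\<lambda>q. r - q" "\<lambda>j. r - j"]) auto

lemma diff_op_minus:
  "(\<lambda>i t. diff_op a b r A1 y i t - diff_op a b r A2 y i t)
     = lower_order_op a b r (\<lambda>q i k t. A1 q i k t - A2 q i k t) y"
  unfolding diff_op_def lower_order_op_def sum_atLeast1_atMost_diff[symmetric]
  by (simp add: fun_eq_iff sum_subtractf[symmetric] left_diff_distrib)

locale hoelder_interval =
  fixes a b \<alpha> :: real
  assumes a_less_b: "a < b" and alpha_le_1: "\<alpha> \<le> 1"
begin

text \<open>Off \<open>[a,b]\<close> the derivative within \<open>{a..b}\<close> is unspecified, so identities involving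
  \<open>der\<close> hold only on \<open>[a,b]\<close> and are transported by the congruence lemmas below.\<close>

definition der :: "(real \<Rightarrow> complex) \<Rightarrow> real \<Rightarrow> complex" where
  "der h = (\<lambda>t. vector_derivative h (at t within {a..b}))"

definition sup_norm :: "(real \<Rightarrow> complex) \<Rightarrow> real" where
  "sup_norm h = Sup ((\<lambda>t. cmod (h t)) ` {a..b})"

definition hquot :: "(real \<Rightarrow> complex) \<Rightarrow> real \<Rightarrow> real \<Rightarrow> real" where
  "hquot h t1 t2 = cmod (h t2 - h t1) / \<bar>t2 - t1\<bar> powr \<alpha>"

definition hquots :: "(real \<Rightarrow> complex) \<Rightarrow> real set" where
  "hquots h = {hquot h t1 t2 | t1 t2. a \<le> t1 \<and> t1 < t2 \<and> t2 \<le> b}"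

definition hoelder_const :: "(real \<Rightarrow> complex) \<Rightarrow> real" where
  "hoelder_const h = Sup ({0} \<union> hquots h)"

lemma hder_Suc_der: "hder a b (Suc j) h = hder a b j (der h)"
  by (induction j) (simp_all add: der_def)

lemma Hoelder_0_iff: "h \<in> Hoelder a b 0 \<alpha> \<longleftrightarrow> continuous_on {a..b} h \<and> bdd_above (hquots h)"
  by (simp add: Hoelder_def hquots_def hquot_def)

lemma Hoelder_Suc_iff:
  "h \<in> Hoelder a b (Suc n) \<alpha> \<longleftrightarrow> continuous_on {a..b} h \<and>
     (\<forall>t\<in>{a..b}. (h has_vector_derivative der h t) (at t within {a..b})) \<and> der h \<in> Hoelder a b n \<alpha>"
proof -
  have le_Suc: "(\<forall>j\<le>Suc n. P j) \<longleftrightarrow> P 0 \<and> (\<forall>j\<le>n. P (Suc j))" for P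
    by (metis Suc_le_mono le0 not0_implies_Suc)
  show ?thesis
    unfolding Hoelder_def mem_Collect_eq le_Suc All_less_Suc2 hder_Suc_der
    by (auto simp: der_def)
qed

lemma hnorm_0: "hnorm a b 0 \<alpha> h = sup_norm h + hoelder_const h"
  by (simp add: hnorm_def sup_norm_def hoelder_const_def hoelder_semi_def hquots_def hquot_def)

lemma hnorm_Suc: "hnorm a b (Suc n) \<alpha> h = sup_norm h + hnorm a b n \<alpha> (der h)"
  unfolding hnorm_def hoelder_semi_def sum.atMost_Suc_shift hder_Suc_der
  by (simp add: sup_norm_def)

lemma sup_norm_ge:
  assumes "continuous_on {a..b} h" "t \<in> {a..b}"
  shows "cmod (h t) \<le> sup_norm h"
proof -
  have "compact ((\<lambda>t. cmod (h t)) ` {a..b})"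
    by (intro compact_continuous_image continuous_intros assms(1)) simp
  then have "bdd_above ((\<lambda>t. cmod (h t)) ` {a..b})"
    by (intro bounded_imp_bdd_above compact_imp_bounded)
  then show ?thesis
    unfolding sup_norm_def using assms(2) by (intro cSup_upper) auto
qed

lemma sup_norm_nonneg: "continuous_on {a..b} h \<Longrightarrow> 0 \<le> sup_norm h"
  using order_trans[OF norm_ge_zero sup_norm_ge[of h a]] a_less_b by simp

lemma sup_norm_le: "(\<And>t. t \<in> {a..b} \<Longrightarrow> cmod (h t) \<le> M) \<Longrightarrow> sup_norm h \<le> M"
  unfolding sup_norm_def using a_less_b by (intro cSup_least) auto

lemma hoelder_const_ge:
  "bdd_above (hquots h) \<Longrightarrow> a \<le> t1 \<Longrightarrow> t1 < t2 \<Longrightarrow> t2 \<le> b \<Longrightarrow> hquot h t1 t2 \<le> hoelder_const h"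
  unfolding hoelder_const_def by (rule cSup_upper) (auto simp: hquots_def)

lemma hoelder_const_nonneg: "bdd_above (hquots h) \<Longrightarrow> 0 \<le> hoelder_const h"
  unfolding hoelder_const_def by (rule cSup_upper) auto

lemma hoelder_const_le:
  assumes "0 \<le> M" "\<And>t1 t2. a \<le> t1 \<Longrightarrow> t1 < t2 \<Longrightarrow> t2 \<le> b \<Longrightarrow> hquot h t1 t2 \<le> M"
  shows "bdd_above (hquots h)" "hoelder_const h \<le> M"
  using assms unfolding hoelder_const_def hquots_def bdd_above_def by (auto intro!: cSup_least)

lemma der_eqI:
  "t \<in> {a..b} \<Longrightarrow> (h has_vector_derivative v) (at t within {a..b}) \<Longrightarrow> der h t = v"
  unfolding der_def using vector_derivative_within_cbox[of a b t h v] a_less_b by simp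

lemma der_cong:
  assumes "\<And>t. t \<in> {a..b} \<Longrightarrow> f t = g t" "t \<in> {a..b}"
  shows "der f t = der g t"
proof -
  have "(f has_vector_derivative v) (at t within {a..b}) \<longleftrightarrow> (g has_vector_derivative v) (at t within {a..b})" for v
    using has_vector_derivative_transform[of t "{a..b}" f g v] has_vector_derivative_transform[of t "{a..b}" g f v]
      assms by metis
  then show ?thesis unfolding der_def vector_derivative_def by simp
qed

lemma hder_cong:
  "(\<And>t. t \<in> {a..b} \<Longrightarrow> f t = g t) \<Longrightarrow> t \<in> {a..b} \<Longrightarrow> hder a b j f t = hder a b j g t"
proof (induction j arbitrary: t)
  case 0
  then show ?case by simp
next
  case (Suc j)
  have "der (hder a b j f) t = der (hder a b j g) t"
    by (rule der_cong) (use Suc in auto)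
  then show ?case by (simp add: der_def)
qed

lemma Hoelder_cong:
  assumes "\<And>t. t \<in> {a..b} \<Longrightarrow> f t = g t"
  shows "(f \<in> Hoelder a b n \<alpha> \<longleftrightarrow> g \<in> Hoelder a b n \<alpha>) \<and> hnorm a b n \<alpha> f = hnorm a b n \<alpha> g"
  using assms
proof (induction n arbitrary: f g)
  case 0
  have "hquot f t1 t2 = hquot g t1 t2" if "a \<le> t1" "t1 < t2" "t2 \<le> b" for t1 t2
    using 0 that by (simp add: hquot_def)
  then have "hquots f = hquots g"
    unfolding hquots_def by (intro Collect_cong) (metis (no_types, lifting))
  moreover have "sup_norm f = sup_norm g"
    unfolding sup_norm_def using 0 by (metis image_cong)
  moreover have "continuous_on {a..b} f \<longleftrightarrow> continuous_on {a..b} g"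
    using 0 by (intro continuous_on_cong) auto
  ultimately show ?case unfolding Hoelder_0_iff hnorm_0 hoelder_const_def by simp
next
  case (Suc n)
  have der_eq: "\<And>t. t \<in> {a..b} \<Longrightarrow> der f t = der g t" by (rule der_cong) (use Suc in auto)
  have "(f has_vector_derivative der f t) (at t within {a..b}) \<longleftrightarrow> (g has_vector_derivative der g t) (at t within {a..b})"
    if "t \<in> {a..b}" for t
    using has_vector_derivative_transform[of t "{a..b}" g f "der f t"]
      has_vector_derivative_transform[of t "{a..b}" f g "der g t"] Suc.prems der_eq[OF that] that by auto
  moreover have "continuous_on {a..b} f \<longleftrightarrow> continuous_on {a..b} g"
    using Suc.prems by (intro continuous_on_cong) auto
  moreover have "sup_norm f = sup_norm g"
    unfolding sup_norm_def using Suc.prems by (metis image_cong)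
  ultimately show ?case unfolding Hoelder_Suc_iff hnorm_Suc using Suc.IH[OF der_eq] by auto
qed

lemma Hoelder_SucI:
  assumes has_der: "\<And>t. t \<in> {a..b} \<Longrightarrow> (h has_vector_derivative h' t) (at t within {a..b})"
    and h': "h' \<in> Hoelder a b n \<alpha>"
  shows "h \<in> Hoelder a b (Suc n) \<alpha> \<and> hnorm a b (Suc n) \<alpha> h = sup_norm h + hnorm a b n \<alpha> h'"
proof -
  have der_eq: "der h t = h' t" if "t \<in> {a..b}" for t
    using der_eqI[OF that has_der[OF that]] .
  have "continuous_on {a..b} h"
    using has_der by (intro continuous_on_vector_derivative) auto
  then show ?thesis
    unfolding Hoelder_Suc_iff hnorm_Suc using Hoelder_cong[OF der_eq, where n=n] has_der der_eq h' by auto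
qed

lemma hnorm_nonneg: "h \<in> Hoelder a b n \<alpha> \<Longrightarrow> 0 \<le> hnorm a b n \<alpha> h"
proof (induction n arbitrary: h)
  case 0
  then show ?case unfolding Hoelder_0_iff hnorm_0 using sup_norm_nonneg hoelder_const_nonneg by (simp add: add_nonneg_nonneg)
next
  case (Suc n)
  then show ?case unfolding Hoelder_Suc_iff hnorm_Suc using sup_norm_nonneg by (simp add: add_nonneg_nonneg)
qed

lemma hquot_le_of_derivative_bound:
  assumes has_der: "\<And>t. t \<in> {a..b} \<Longrightarrow> (h has_vector_derivative h' t) (at t within {a..b})"
    and bound: "\<And>t. t \<in> {a..b} \<Longrightarrow> cmod (h' t) \<le> M"
    and t: "a \<le> t1" "t1 < t2" "t2 \<le> b"
  shows "hquot h t1 t2 \<le> (b - a) powr (1 - \<alpha>) * M"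
proof -
  have M: "0 \<le> M"
    using order_trans[OF norm_ge_zero bound[of a]] a_less_b by simp
  have "norm (h t2 - h t1) \<le> M * norm (t2 - t1)"
  proof (rule differentiable_bound[of "{a..b}" h "\<lambda>t x. x *\<^sub>R h' t" M])
    show "(h has_derivative (\<lambda>x. x *\<^sub>R h' t)) (at t within {a..b})" if "t \<in> {a..b}" for t
      using has_der[OF that] by (simp add: has_vector_derivative_def)
    show "onorm (\<lambda>x. x *\<^sub>R h' t) \<le> M" if "t \<in> {a..b}" for t
      using bound[OF that] M by (intro onorm_bound) (auto simp: mult.commute[of M] intro!: mult_left_mono)
  qed (use t in auto)
  then have "cmod (h t2 - h t1) \<le> M * (t2 - t1)"
    using t by simp
  define d where "d = t2 - t1"
  have d: "0 < d" "d \<le> b - a"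
    using t by (auto simp: d_def)
  have "hquot h t1 t2 \<le> M * d / d powr \<alpha>"
    using \<open>cmod (h t2 - h t1) \<le> M * (t2 - t1)\<close> d unfolding hquot_def d_def by (simp add: divide_right_mono)
  also have "\<dots> = d powr (1 - \<alpha>) * M"
    using d by (simp add: powr_diff)
  also have "\<dots> \<le> (b - a) powr (1 - \<alpha>) * M"
    using M d alpha_le_1 by (intro mult_right_mono powr_mono2) auto
  finally show ?thesis .
qed

lemma sup_norm_zero: "sup_norm (\<lambda>t. 0) = 0"
  unfolding sup_norm_def using a_less_b by (simp add: cSUP_const)

lemma sup_norm_lincomb:
  assumes "continuous_on {a..b} f" "continuous_on {a..b} g"
  shows "sup_norm (\<lambda>t. f t + c * g t) \<le> sup_norm f + cmod c * sup_norm g"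
proof (rule sup_norm_le)
  fix t assume t: "t \<in> {a..b}"
  have "cmod (f t + c * g t) \<le> cmod (f t) + cmod c * cmod (g t)"
    by (metis norm_mult norm_triangle_ineq)
  also have "\<dots> \<le> sup_norm f + cmod c * sup_norm g"
    using sup_norm_ge[OF assms(1) t] sup_norm_ge[OF assms(2) t] by (intro add_mono mult_left_mono) auto
  finally show "cmod (f t + c * g t) \<le> sup_norm f + cmod c * sup_norm g" .
qed

lemma sup_norm_mult:
  assumes "continuous_on {a..b} f" "continuous_on {a..b} g"
  shows "sup_norm (\<lambda>t. f t * g t) \<le> sup_norm f * sup_norm g"
  using sup_norm_ge[OF assms(1)] sup_norm_ge[OF assms(2)]
  by (intro sup_norm_le) (auto simp: norm_mult intro!: mult_mono sup_norm_nonneg assms)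

lemma hnorm_Suc_ge:
  assumes "h \<in> Hoelder a b (Suc n) \<alpha>"
  shows "sup_norm h \<le> hnorm a b (Suc n) \<alpha> h" "hnorm a b n \<alpha> (der h) \<le> hnorm a b (Suc n) \<alpha> h"
  using assms sup_norm_nonneg hnorm_nonneg unfolding Hoelder_Suc_iff hnorm_Suc by auto

lemma Hoelder_zero: "(\<lambda>t. 0) \<in> Hoelder a b n \<alpha> \<and> hnorm a b n \<alpha> (\<lambda>t. 0) = 0"
proof (induction n)
  case 0
  have "hquot (\<lambda>t. 0) t1 t2 \<le> 0" for t1 t2
    by (simp add: hquot_def)
  then have "bdd_above (hquots (\<lambda>t. 0))" "hoelder_const (\<lambda>t. 0) \<le> 0"
    using hoelder_const_le[of 0 "\<lambda>t. 0"] by auto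
  then show ?case
    unfolding Hoelder_0_iff hnorm_0 sup_norm_zero using hoelder_const_nonneg by fastforce
next
  case (Suc n)
  have "((\<lambda>t. 0) has_vector_derivative 0) (at t within {a..b})" for t
    by (rule has_vector_derivative_const)
  then show ?case using Hoelder_SucI[of "\<lambda>t. 0" "\<lambda>t. 0" n] Suc sup_norm_zero by auto
qed

lemma Hoelder_lincomb:
  "f \<in> Hoelder a b n \<alpha> \<Longrightarrow> g \<in> Hoelder a b n \<alpha> \<Longrightarrow>
   (\<lambda>t. f t + c * g t) \<in> Hoelder a b n \<alpha> \<and>
   hnorm a b n \<alpha> (\<lambda>t. f t + c * g t) \<le> hnorm a b n \<alpha> f + cmod c * hnorm a b n \<alpha> g"
proof (induction n arbitrary: f g)
  case 0
  then have f: "continuous_on {a..b} f" "bdd_above (hquots f)"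
    and g: "continuous_on {a..b} g" "bdd_above (hquots g)"
    by (auto simp: Hoelder_0_iff)
  have quot: "hquot (\<lambda>t. f t + c * g t) t1 t2 \<le> hoelder_const f + cmod c * hoelder_const g"
    if "a \<le> t1" "t1 < t2" "t2 \<le> b" for t1 t2
  proof -
    have "cmod (f t2 + c * g t2 - (f t1 + c * g t1)) \<le> cmod (f t2 - f t1) + cmod c * cmod (g t2 - g t1)"
      by (metis add_diff_add norm_mult norm_triangle_ineq right_diff_distrib)
    then have "hquot (\<lambda>t. f t + c * g t) t1 t2 \<le> hquot f t1 t2 + cmod c * hquot g t1 t2"
      unfolding hquot_def by (simp add: divide_right_mono add_divide_distrib[symmetric])
    also have "\<dots> \<le> hoelder_const f + cmod c * hoelder_const g"
      using hoelder_const_ge[OF f(2) that] hoelder_const_ge[OF g(2) that] by (intro add_mono mult_left_mono) auto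
    finally show ?thesis .
  qed
  have M: "0 \<le> hoelder_const f + cmod c * hoelder_const g"
    using hoelder_const_nonneg f(2) g(2) by simp
  have hc: "bdd_above (hquots (\<lambda>t. f t + c * g t))"
      "hoelder_const (\<lambda>t. f t + c * g t) \<le> hoelder_const f + cmod c * hoelder_const g"
    by (rule hoelder_const_le[OF M quot]; assumption)+
  show ?case
    unfolding Hoelder_0_iff hnorm_0 using f g hc sup_norm_lincomb[OF f(1) g(1), of c]
    by (auto intro!: continuous_intros simp: distrib_left)
next
  case (Suc n)
  then have f: "\<And>t. t \<in> {a..b} \<Longrightarrow> (f has_vector_derivative der f t) (at t within {a..b})"
      "continuous_on {a..b} f" "der f \<in> Hoelder a b n \<alpha>"
    and g: "\<And>t. t \<in> {a..b} \<Longrightarrow> (g has_vector_derivative der g t) (at t within {a..b})"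
      "continuous_on {a..b} g" "der g \<in> Hoelder a b n \<alpha>"
    by (auto simp: Hoelder_Suc_iff)
  have has_der: "((\<lambda>t. f t + c * g t) has_vector_derivative der f t + c * der g t) (at t within {a..b})"
    if "t \<in> {a..b}" for t
    using f(1)[OF that] g(1)[OF that] by (intro has_vector_derivative_add has_vector_derivative_mult_right)
  note IH = Suc.IH[OF f(3) g(3)]
  note lc = Hoelder_SucI[OF has_der conjunct1[OF IH]]
  show ?case
    using lc IH sup_norm_lincomb[OF f(2) g(2), of c] unfolding hnorm_Suc by (simp add: distrib_left)
qed

lemma Hoelder_add:
  "f \<in> Hoelder a b n \<alpha> \<Longrightarrow> g \<in> Hoelder a b n \<alpha> \<Longrightarrow>
   (\<lambda>t. f t + g t) \<in> Hoelder a b n \<alpha> \<and> hnorm a b n \<alpha> (\<lambda>t. f t + g t) \<le> hnorm a b n \<alpha> f + hnorm a b n \<alpha> g"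
  using Hoelder_lincomb[of f n g 1] by simp

lemma Hoelder_diff:
  "f \<in> Hoelder a b n \<alpha> \<Longrightarrow> g \<in> Hoelder a b n \<alpha> \<Longrightarrow>
   (\<lambda>t. f t - g t) \<in> Hoelder a b n \<alpha> \<and> hnorm a b n \<alpha> (\<lambda>t. f t - g t) \<le> hnorm a b n \<alpha> f + hnorm a b n \<alpha> g"
  using Hoelder_lincomb[of f n g "-1"] by simp

lemma Hoelder_scale:
  "g \<in> Hoelder a b n \<alpha> \<Longrightarrow>
   (\<lambda>t. c * g t) \<in> Hoelder a b n \<alpha> \<and> hnorm a b n \<alpha> (\<lambda>t. c * g t) \<le> cmod c * hnorm a b n \<alpha> g"
  using Hoelder_lincomb[of "\<lambda>t. 0" n g c] Hoelder_zero by simp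

lemma Hoelder_sum:
  assumes "finite S" "\<And>j. j \<in> S \<Longrightarrow> f j \<in> Hoelder a b n \<alpha> \<and> hnorm a b n \<alpha> (f j) \<le> M j"
  shows "(\<lambda>t. \<Sum>j\<in>S. f j t) \<in> Hoelder a b n \<alpha> \<and> hnorm a b n \<alpha> (\<lambda>t. \<Sum>j\<in>S. f j t) \<le> (\<Sum>j\<in>S. M j)"
  using assms
proof (induction S rule: finite_induct)
  case empty
  then show ?case using Hoelder_zero by simp
next
  case (insert x S)
  then show ?case using Hoelder_add[of "f x" n "\<lambda>t. \<Sum>j\<in>S. f j t"] by force
qed

definition embed_const :: real where
  "embed_const = 1 + (b - a) powr (1 - \<alpha>)"

lemma embed_const_ge_1: "1 \<le> embed_const"
  by (simp add: embed_const_def)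

lemma embed_const_pow_nonneg: "0 \<le> embed_const ^ k"
  using embed_const_ge_1 by simp

lemma Hoelder_Suc_embed:
  "h \<in> Hoelder a b (Suc n) \<alpha> \<Longrightarrow>
   h \<in> Hoelder a b n \<alpha> \<and> hnorm a b n \<alpha> h \<le> embed_const * hnorm a b (Suc n) \<alpha> h"
proof (induction n arbitrary: h)
  case 0
  then have h: "\<And>t. t \<in> {a..b} \<Longrightarrow> (h has_vector_derivative der h t) (at t within {a..b})"
      "continuous_on {a..b} h" "continuous_on {a..b} (der h)" "bdd_above (hquots (der h))"
    by (auto simp: Hoelder_Suc_iff Hoelder_0_iff)
  define c where "c = (b - a) powr (1 - \<alpha>)"
  have quot: "hquot h t1 t2 \<le> c * sup_norm (der h)" if "a \<le> t1" "t1 < t2" "t2 \<le> b" for t1 t2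
    unfolding c_def using hquot_le_of_derivative_bound[OF h(1) sup_norm_ge[OF h(3)] that] .
  have nonneg: "0 \<le> c" "0 \<le> sup_norm h" "0 \<le> sup_norm (der h)" "0 \<le> hoelder_const (der h)"
    using sup_norm_nonneg h(2,3) hoelder_const_nonneg[OF h(4)] by (auto simp: c_def)
  then have M: "0 \<le> c * sup_norm (der h)"
    by simp
  have hc: "bdd_above (hquots h)" "hoelder_const h \<le> c * sup_norm (der h)"
    by (rule hoelder_const_le[OF M quot]; assumption)+
  have "sup_norm h + hoelder_const h \<le> (1 + c) * (sup_norm h + (sup_norm (der h) + hoelder_const (der h)))"
    unfolding ring_distribs using hc(2) nonneg mult_nonneg_nonneg[OF nonneg(1,2)] mult_nonneg_nonneg[OF nonneg(1,4)]
    by linarith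
  then show ?case
    unfolding Hoelder_0_iff hnorm_0 hnorm_Suc embed_const_def c_def[symmetric] using h hc(1) by simp
next
  case (Suc n)
  then have h: "\<And>t. t \<in> {a..b} \<Longrightarrow> (h has_vector_derivative der h t) (at t within {a..b})"
      "der h \<in> Hoelder a b (Suc n) \<alpha>" "0 \<le> sup_norm h"
    using sup_norm_nonneg by (auto simp: Hoelder_Suc_iff)
  from Suc.IH[OF h(2)] have IH: "der h \<in> Hoelder a b n \<alpha>"
      "hnorm a b n \<alpha> (der h) \<le> embed_const * hnorm a b (Suc n) \<alpha> (der h)"
    by auto
  from Hoelder_SucI[OF h(1) IH(1)] have Suc_n: "h \<in> Hoelder a b (Suc n) \<alpha>"
      "hnorm a b (Suc n) \<alpha> h = sup_norm h + hnorm a b n \<alpha> (der h)"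
    by auto
  have "sup_norm h \<le> embed_const * sup_norm h"
    using mult_right_mono[OF embed_const_ge_1 h(3)] by simp
  then have "hnorm a b (Suc n) \<alpha> h \<le> embed_const * hnorm a b (Suc (Suc n)) \<alpha> h"
    unfolding hnorm_Suc[of "Suc n"] distrib_left using IH(2) Suc_n(2) by linarith
  with Suc_n(1) show ?case
    by blast
qed

lemma Hoelder_embed:
  "h \<in> Hoelder a b (n + k) \<alpha> \<Longrightarrow>
   h \<in> Hoelder a b n \<alpha> \<and> hnorm a b n \<alpha> h \<le> embed_const ^ k * hnorm a b (n + k) \<alpha> h"
proof (induction k)
  case 0
  then show ?case by simp
next
  case (Suc k)
  have step: "h \<in> Hoelder a b (n + k) \<alpha>" "hnorm a b (n + k) \<alpha> h \<le> embed_const * hnorm a b (n + Suc k) \<alpha> h"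
    using Hoelder_Suc_embed[of h "n + k"] Suc.prems by auto
  have "embed_const ^ k * hnorm a b (n + k) \<alpha> h \<le> embed_const ^ Suc k * hnorm a b (n + Suc k) \<alpha> h"
    using mult_left_mono[OF step(2) embed_const_pow_nonneg] by (simp add: mult.assoc mult.left_commute)
  then show ?case
    using Suc.IH[OF step(1)] by auto
qed

lemma Hoelder_hder:
  "y \<in> Hoelder a b (n + q) \<alpha> \<Longrightarrow>
   hder a b q y \<in> Hoelder a b n \<alpha> \<and> hnorm a b n \<alpha> (hder a b q y) \<le> hnorm a b (n + q) \<alpha> y"
proof (induction q arbitrary: y)
  case 0
  then show ?case by simp
next
  case (Suc q)
  then have y: "y \<in> Hoelder a b (Suc (n + q)) \<alpha>"
    by simp
  then have "der y \<in> Hoelder a b (n + q) \<alpha>"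
    by (simp add: Hoelder_Suc_iff)
  with Suc.IH have IH: "hder a b q (der y) \<in> Hoelder a b n \<alpha>"
      "hnorm a b n \<alpha> (hder a b q (der y)) \<le> hnorm a b (n + q) \<alpha> (der y)"
    by auto
  show ?case
    unfolding hder_Suc_der using IH(1) order_trans[OF IH(2) hnorm_Suc_ge(2)[OF y]] by simp
qed

lemma Hoelder_hder_embed:
  assumes "q \<le> k" "y \<in> Hoelder a b (n + k) \<alpha>"
  shows "hder a b q y \<in> Hoelder a b n \<alpha> \<and> hnorm a b n \<alpha> (hder a b q y) \<le> embed_const ^ k * hnorm a b (n + k) \<alpha> y"
proof -
  have "y \<in> Hoelder a b ((n + (k - q)) + q) \<alpha>" using assms by simp
  from Hoelder_hder[OF this] have d: "hder a b q y \<in> Hoelder a b (n + (k - q)) \<alpha>"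
    "hnorm a b (n + (k - q)) \<alpha> (hder a b q y) \<le> hnorm a b (n + k) \<alpha> y"
    using assms(1) by auto
  from Hoelder_embed[OF d(1)] have "hder a b q y \<in> Hoelder a b n \<alpha>"
    "hnorm a b n \<alpha> (hder a b q y) \<le> embed_const ^ (k - q) * hnorm a b (n + (k - q)) \<alpha> (hder a b q y)"
    by auto
  moreover have "embed_const ^ (k - q) * hnorm a b (n + (k - q)) \<alpha> (hder a b q y)
      \<le> embed_const ^ k * hnorm a b (n + k) \<alpha> y"
    using d(2) hnorm_nonneg[OF d(1)] embed_const_ge_1 embed_const_pow_nonneg
    by (intro mult_mono power_increasing) auto
  ultimately show ?thesis
    by auto
qed

text \<open>The recursion comes from the product rule together with \<open>Hoelder_Suc_embed\<close>.\<close>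

primrec mult_const :: "nat \<Rightarrow> real" where
  "mult_const 0 = 1"
| "mult_const (Suc n) = 1 + 2 * embed_const * mult_const n"

lemma mult_const_nonneg: "0 \<le> mult_const n"
  using embed_const_ge_1 by (induction n) auto

lemma Hoelder_0_mult:
  assumes "f \<in> Hoelder a b 0 \<alpha>" "g \<in> Hoelder a b 0 \<alpha>"
  shows "(\<lambda>t. f t * g t) \<in> Hoelder a b 0 \<alpha> \<and>
    hnorm a b 0 \<alpha> (\<lambda>t. f t * g t) \<le> hnorm a b 0 \<alpha> f * hnorm a b 0 \<alpha> g"
proof -
  from assms have f: "continuous_on {a..b} f" "bdd_above (hquots f)"
    and g: "continuous_on {a..b} g" "bdd_above (hquots g)"
    by (auto simp: Hoelder_0_iff)
  have nonneg: "0 \<le> sup_norm f" "0 \<le> sup_norm g" "0 \<le> hoelder_const f" "0 \<le> hoelder_const g"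
    using sup_norm_nonneg hoelder_const_nonneg f g by auto
  have quot: "hquot (\<lambda>t. f t * g t) t1 t2 \<le> sup_norm f * hoelder_const g + hoelder_const f * sup_norm g"
    if t: "a \<le> t1" "t1 < t2" "t2 \<le> b" for t1 t2
  proof -
    have "f t2 * g t2 - f t1 * g t1 = f t2 * (g t2 - g t1) + (f t2 - f t1) * g t1"
      by (simp add: algebra_simps)
    then have "cmod (f t2 * g t2 - f t1 * g t1) \<le> cmod (f t2) * cmod (g t2 - g t1) + cmod (f t2 - f t1) * cmod (g t1)"
      by (metis norm_mult norm_triangle_ineq)
    then have "hquot (\<lambda>t. f t * g t) t1 t2 \<le> cmod (f t2) * hquot g t1 t2 + hquot f t1 t2 * cmod (g t1)"
      using t unfolding hquot_def by (simp add: divide_right_mono add_divide_distrib[symmetric])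
    also have "\<dots> \<le> sup_norm f * hoelder_const g + hoelder_const f * sup_norm g"
      using sup_norm_ge[OF f(1), of t2] sup_norm_ge[OF g(1), of t1] t nonneg
        hoelder_const_ge[OF f(2) t] hoelder_const_ge[OF g(2) t]
      by (intro add_mono mult_mono) (auto simp: hquot_def)
    finally show ?thesis .
  qed
  have M: "0 \<le> sup_norm f * hoelder_const g + hoelder_const f * sup_norm g"
    using nonneg by simp
  have hc: "bdd_above (hquots (\<lambda>t. f t * g t))"
      "hoelder_const (\<lambda>t. f t * g t) \<le> sup_norm f * hoelder_const g + hoelder_const f * sup_norm g"
    by (rule hoelder_const_le[OF M quot]; assumption)+
  have "sup_norm f * sup_norm g + (sup_norm f * hoelder_const g + hoelder_const f * sup_norm g)
      \<le> (sup_norm f + hoelder_const f) * (sup_norm g + hoelder_const g)"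
    using nonneg by (simp add: algebra_simps)
  then have "hnorm a b 0 \<alpha> (\<lambda>t. f t * g t) \<le> hnorm a b 0 \<alpha> f * hnorm a b 0 \<alpha> g"
    unfolding hnorm_0 using hc(2) sup_norm_mult[OF f(1) g(1)] by linarith
  moreover have "continuous_on {a..b} (\<lambda>t. f t * g t)"
    using f(1) g(1) by (rule continuous_on_mult)
  ultimately show ?thesis
    unfolding Hoelder_0_iff using hc(1) by simp
qed

lemma Hoelder_Suc_mult:
  assumes mult_n: "\<And>f g. f \<in> Hoelder a b n \<alpha> \<Longrightarrow> g \<in> Hoelder a b n \<alpha> \<Longrightarrow>
      (\<lambda>t. f t * g t) \<in> Hoelder a b n \<alpha> \<and> hnorm a b n \<alpha> (\<lambda>t. f t * g t) \<le> K * hnorm a b n \<alpha> f * hnorm a b n \<alpha> g"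
    and K: "0 \<le> K" and f: "f \<in> Hoelder a b (Suc n) \<alpha>" and g: "g \<in> Hoelder a b (Suc n) \<alpha>"
  shows "(\<lambda>t. f t * g t) \<in> Hoelder a b (Suc n) \<alpha> \<and>
    hnorm a b (Suc n) \<alpha> (\<lambda>t. f t * g t)
      \<le> (1 + 2 * embed_const * K) * hnorm a b (Suc n) \<alpha> f * hnorm a b (Suc n) \<alpha> g"
proof -
  define Hf where "Hf = hnorm a b (Suc n) \<alpha> f"
  define Hg where "Hg = hnorm a b (Suc n) \<alpha> g"
  from f g have df: "\<And>t. t \<in> {a..b} \<Longrightarrow> (f has_vector_derivative der f t) (at t within {a..b})"
      "continuous_on {a..b} f" "der f \<in> Hoelder a b n \<alpha>"
    and dg: "\<And>t. t \<in> {a..b} \<Longrightarrow> (g has_vector_derivative der g t) (at t within {a..b})"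
      "continuous_on {a..b} g" "der g \<in> Hoelder a b n \<alpha>"
    by (auto simp: Hoelder_Suc_iff)
  from f g have ef: "f \<in> Hoelder a b n \<alpha>" "hnorm a b n \<alpha> f \<le> embed_const * Hf"
    and eg: "g \<in> Hoelder a b n \<alpha>" "hnorm a b n \<alpha> g \<le> embed_const * Hg"
    using Hoelder_Suc_embed unfolding Hf_def Hg_def by auto
  have bounds: "sup_norm f \<le> Hf" "sup_norm g \<le> Hg" "hnorm a b n \<alpha> (der f) \<le> Hf" "hnorm a b n \<alpha> (der g) \<le> Hg"
    using hnorm_Suc_ge f g unfolding Hf_def Hg_def by auto
  have nonneg: "0 \<le> sup_norm f" "0 \<le> sup_norm g" "0 \<le> hnorm a b n \<alpha> (der f)" "0 \<le> hnorm a b n \<alpha> (der g)"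
      "0 \<le> hnorm a b n \<alpha> f" "0 \<le> hnorm a b n \<alpha> g" "0 \<le> embed_const"
    using sup_norm_nonneg df(2,3) dg(2,3) hnorm_nonneg ef(1) eg(1) embed_const_ge_1 by auto
  have H_nonneg: "0 \<le> Hf" "0 \<le> Hg"
    using bounds(1,2) nonneg(1,2) by linarith+
  have sup_prod: "sup_norm f * sup_norm g \<le> Hf * Hg"
    using bounds(1,2) nonneg(2) H_nonneg by (intro mult_mono) auto
  have has_der: "((\<lambda>t. f t * g t) has_vector_derivative f t * der g t + der f t * g t) (at t within {a..b})"
    if "t \<in> {a..b}" for t
    using df(1)[OF that] dg(1)[OF that] by (rule has_vector_derivative_mult)
  note fDg = mult_n[OF ef(1) dg(3)] and Dfg = mult_n[OF df(3) eg(1)]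
  note sum = Hoelder_add[OF conjunct1[OF fDg] conjunct1[OF Dfg]]
  note prod = Hoelder_SucI[OF has_der conjunct1[OF sum]]
  have "hnorm a b n \<alpha> (\<lambda>t. f t * der g t + der f t * g t)
      \<le> K * hnorm a b n \<alpha> f * hnorm a b n \<alpha> (der g) + K * hnorm a b n \<alpha> (der f) * hnorm a b n \<alpha> g"
    using sum fDg Dfg by (meson add_mono order_trans)
  also have "\<dots> \<le> K * (embed_const * Hf) * Hg + K * Hf * (embed_const * Hg)"
    using ef eg bounds nonneg H_nonneg K
    by (intro add_mono mult_mono mult_left_mono) (auto intro!: mult_nonneg_nonneg)
  finally have "hnorm a b (Suc n) \<alpha> (\<lambda>t. f t * g t) \<le> Hf * Hg + (K * (embed_const * Hf) * Hg + K * Hf * (embed_const * Hg))"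
    using conjunct2[OF prod] sup_norm_mult[OF df(2) dg(2)] sup_prod by linarith
  also have "\<dots> = (1 + 2 * embed_const * K) * Hf * Hg"
    by (simp add: algebra_simps)
  finally show ?thesis
    using conjunct1[OF prod] unfolding Hf_def Hg_def by simp
qed

lemma Hoelder_mult:
  "f \<in> Hoelder a b n \<alpha> \<Longrightarrow> g \<in> Hoelder a b n \<alpha> \<Longrightarrow>
   (\<lambda>t. f t * g t) \<in> Hoelder a b n \<alpha> \<and>
   hnorm a b n \<alpha> (\<lambda>t. f t * g t) \<le> mult_const n * hnorm a b n \<alpha> f * hnorm a b n \<alpha> g"
proof (induction n arbitrary: f g)
  case 0
  from Hoelder_0_mult[OF 0] show ?case
    by simp
next
  case (Suc n)
  have "(\<lambda>t. f t * g t) \<in> Hoelder a b (Suc n) \<alpha> \<and> hnorm a b (Suc n) \<alpha> (\<lambda>t. f t * g t)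
      \<le> (1 + 2 * embed_const * mult_const n) * hnorm a b (Suc n) \<alpha> f * hnorm a b (Suc n) \<alpha> g"
    by (rule Hoelder_Suc_mult[where K = "mult_const n"]) (fact Suc.IH mult_const_nonneg Suc.prems)+
  then show ?case
    by simp
qed

definition monom :: "complex \<Rightarrow> nat \<Rightarrow> real \<Rightarrow> complex" where
  "monom c p t = c * complex_of_real ((t - a) ^ p)"

lemma monom_has_vector_derivative:
  "(monom c p has_vector_derivative monom (c * of_nat p) (p - 1) t) (at t within S)"
proof -
  have "((\<lambda>t. complex_of_real ((t - a) ^ p)) has_vector_derivative complex_of_real (real p * (t - a) ^ (p - 1))) (at t within S)"
    by (intro has_vector_derivative_of_real) (auto intro!: derivative_eq_intros)
  then have "((\<lambda>t. c * complex_of_real ((t - a) ^ p)) has_vector_derivative c * complex_of_real (real p * (t - a) ^ (p - 1))) (at t within S)"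
    by (rule has_vector_derivative_mult_right)
  then show ?thesis
    unfolding monom_def[abs_def] by (simp add: mult.assoc)
qed

lemma monom_Hoelder: "monom c p \<in> Hoelder a b N \<alpha>"
proof (induction N arbitrary: c p)
  case 0
  define M where "M = (b - a) powr (1 - \<alpha>) * (cmod c * real p * (b - a) ^ (p - 1))"
  have M: "0 \<le> M"
    unfolding M_def using a_less_b by simp
  have quot: "hquot (monom c p) t1 t2 \<le> M"
    if "a \<le> t1" "t1 < t2" "t2 \<le> b" for t1 t2
    unfolding M_def
  proof (rule hquot_le_of_derivative_bound[OF monom_has_vector_derivative _ that])
    fix t assume "t \<in> {a..b}"
    then have "\<bar>t - a\<bar> ^ (p - 1) \<le> (b - a) ^ (p - 1)" by (intro power_mono) auto
    moreover have "cmod (monom (c * of_nat p) (p - 1) t) = cmod c * real p * \<bar>t - a\<bar> ^ (p - 1)"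
      unfolding monom_def by (simp add: norm_mult norm_power del: of_real_diff)
    ultimately show "cmod (monom (c * of_nat p) (p - 1) t) \<le> cmod c * real p * (b - a) ^ (p - 1)"
      by (simp add: mult_left_mono)
  qed
  have "bdd_above (hquots (monom c p))"
    by (rule hoelder_const_le(1)[OF M quot]; assumption)
  moreover have "continuous_on {a..b} (monom c p)"
    unfolding monom_def[abs_def] by (auto intro!: continuous_intros)
  ultimately show ?case unfolding Hoelder_0_iff by simp
next
  case (Suc N)
  then show ?case using Hoelder_SucI[OF monom_has_vector_derivative Suc.IH] by blast
qed

definition unit_monom :: "'m \<Rightarrow> nat \<Rightarrow> 'm \<Rightarrow> real \<Rightarrow> complex" where
  "unit_monom l p = (\<lambda>k. monom (if k = l then 1 else 0) p)"

lemma unit_monom_vec_Hoelder: "unit_monom l p \<in> vec_Hoelder a b N \<alpha>"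
  unfolding unit_monom_def vec_Hoelder_def by (simp add: monom_Hoelder)

definition falling_fact :: "nat \<Rightarrow> nat \<Rightarrow> nat" where
  "falling_fact p q = (\<Prod>j<q. p - j)"

lemma falling_fact_eq_0_iff: "falling_fact p q = 0 \<longleftrightarrow> p < q"
  unfolding falling_fact_def by (auto simp: prod_zero_iff)

lemma hder_monom:
  "t \<in> {a..b} \<Longrightarrow> hder a b q (monom c p) t = monom (c * of_nat (falling_fact p q)) (p - q) t"
proof (induction q arbitrary: c p)
  case 0
  then show ?case by (simp add: falling_fact_def)
next
  case (Suc q)
  have "hder a b (Suc q) (monom c p) t = hder a b q (monom (c * of_nat p) (p - 1)) t"
    unfolding hder_Suc_der using der_eqI[OF _ monom_has_vector_derivative] Suc.prems
    by (intro hder_cong) auto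
  also have "\<dots> = monom (c * of_nat (falling_fact p (Suc q))) (p - Suc q) t"
    using Suc.IH[OF Suc.prems] by (simp add: falling_fact_def prod.lessThan_Suc_shift mult.assoc del: prod.lessThan_Suc)
  finally show ?case .
qed

lemma vec_hnorm_nonneg: "y \<in> vec_Hoelder a b N \<alpha> \<Longrightarrow> 0 \<le> vec_hnorm a b N \<alpha> y"
  unfolding vec_Hoelder_def vec_hnorm_def by (auto intro!: sum_nonneg hnorm_nonneg)

lemma hnorm_le_vec_hnorm: "y \<in> vec_Hoelder a b N \<alpha> \<Longrightarrow> hnorm a b N \<alpha> (y k) \<le> vec_hnorm a b N \<alpha> y"
  unfolding vec_Hoelder_def vec_hnorm_def by (rule member_le_sum) (auto intro!: hnorm_nonneg)

lemma mat_hnorm_nonneg: "B \<in> mat_Hoelder a b N \<alpha> \<Longrightarrow> 0 \<le> mat_hnorm a b N \<alpha> B"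
  unfolding mat_Hoelder_def mat_hnorm_def by (auto intro!: sum_nonneg hnorm_nonneg)

lemma lower_order_op_bound:
  assumes B: "\<forall>q<r. B q \<in> mat_Hoelder a b n \<alpha>" and y: "y \<in> vec_Hoelder a b (n + r) \<alpha>"
  shows "lower_order_op a b r B y \<in> vec_Hoelder a b n \<alpha> \<and>
    vec_hnorm a b n \<alpha> (lower_order_op a b r B y)
      \<le> mult_const n * embed_const ^ r * (\<Sum>q<r. mat_hnorm a b n \<alpha> (B q)) * vec_hnorm a b (n + r) \<alpha> y"
proof -
  define K where "K = mult_const n * embed_const ^ r"
  define V where "V = vec_hnorm a b (n + r) \<alpha> y"
  have summand: "(\<lambda>t. B q i k t * hder a b q (y k) t) \<in> Hoelder a b n \<alpha> \<and>
      hnorm a b n \<alpha> (\<lambda>t. B q i k t * hder a b q (y k) t) \<le> K * hnorm a b n \<alpha> (B q i k) * V"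
    if q: "q < r" for q i k
  proof -
    have Bqik: "B q i k \<in> Hoelder a b n \<alpha>"
      using B q by (simp add: mat_Hoelder_def)
    have "y k \<in> Hoelder a b (n + r) \<alpha>"
      using y by (simp add: vec_Hoelder_def)
    with Hoelder_hder_embed[of q r "y k" n] q have yk: "hder a b q (y k) \<in> Hoelder a b n \<alpha>"
        "hnorm a b n \<alpha> (hder a b q (y k)) \<le> embed_const ^ r * hnorm a b (n + r) \<alpha> (y k)"
      by auto
    have "hnorm a b n \<alpha> (hder a b q (y k)) \<le> embed_const ^ r * V"
      unfolding V_def using order_trans[OF yk(2) mult_left_mono[OF hnorm_le_vec_hnorm[OF y] embed_const_pow_nonneg]] .
    have "mult_const n * hnorm a b n \<alpha> (B q i k) * hnorm a b n \<alpha> (hder a b q (y k))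
        \<le> mult_const n * hnorm a b n \<alpha> (B q i k) * (embed_const ^ r * V)"
      using \<open>hnorm a b n \<alpha> (hder a b q (y k)) \<le> embed_const ^ r * V\<close> mult_const_nonneg hnorm_nonneg[OF Bqik]
      by (intro mult_left_mono) auto
    then show ?thesis
      using Hoelder_mult[OF Bqik yk(1)] unfolding K_def by (auto simp: algebra_simps)
  qed
  have component: "lower_order_op a b r B y i \<in> Hoelder a b n \<alpha> \<and>
      hnorm a b n \<alpha> (lower_order_op a b r B y i) \<le> (\<Sum>q<r. \<Sum>k\<in>UNIV. K * hnorm a b n \<alpha> (B q i k) * V)" for i
    unfolding lower_order_op_def using summand by (intro Hoelder_sum) auto
  have "vec_hnorm a b n \<alpha> (lower_order_op a b r B y) \<le> (\<Sum>i\<in>UNIV. \<Sum>q<r. \<Sum>k\<in>UNIV. K * hnorm a b n \<alpha> (B q i k) * V)"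
    unfolding vec_hnorm_def using component by (intro sum_mono) auto
  also have "\<dots> = K * (\<Sum>q<r. mat_hnorm a b n \<alpha> (B q)) * V"
    unfolding mat_hnorm_def by (subst sum.swap) (simp add: sum_distrib_left sum_distrib_right mult.assoc)
  finally show ?thesis
    using component unfolding vec_Hoelder_def K_def V_def by auto
qed

lemma op_norm_le:
  fixes T :: "('m::finite \<Rightarrow> real \<Rightarrow> complex) \<Rightarrow> ('m \<Rightarrow> real \<Rightarrow> complex)"
  assumes M: "0 \<le> M"
    and bound: "\<And>y. y \<in> vec_Hoelder a b (n + r) \<alpha> \<Longrightarrow> vec_hnorm a b n \<alpha> (T y) \<le> M * vec_hnorm a b (n + r) \<alpha> y"
  shows "0 \<le> op_norm a b n r \<alpha> T" "op_norm a b n r \<alpha> T \<le> M"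
    and "\<And>y. y \<in> vec_Hoelder a b (n + r) \<alpha> \<Longrightarrow>
      vec_hnorm a b n \<alpha> (T y) \<le> op_norm a b n r \<alpha> T * vec_hnorm a b (n + r) \<alpha> y"
proof -
  define Q where "Q = {vec_hnorm a b n \<alpha> (T y) / vec_hnorm a b (n + r) \<alpha> y | y.
      y \<in> vec_Hoelder a b (n + r) \<alpha> \<and> vec_hnorm a b (n + r) \<alpha> y \<noteq> 0}"
  have op_norm: "op_norm a b n r \<alpha> T = Sup ({0} \<union> Q)"
    unfolding op_norm_def Q_def ..
  have quot_le: "x \<le> M" if "x \<in> Q" for x
  proof -
    from that obtain y where y: "y \<in> vec_Hoelder a b (n + r) \<alpha>" "vec_hnorm a b (n + r) \<alpha> y \<noteq> 0"
      and x: "x = vec_hnorm a b n \<alpha> (T y) / vec_hnorm a b (n + r) \<alpha> y"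
      unfolding Q_def by blast
    then have "0 < vec_hnorm a b (n + r) \<alpha> y"
      using vec_hnorm_nonneg[OF y(1)] by simp
    then show ?thesis
      using bound[OF y(1)] x by (simp add: divide_le_eq)
  qed
  then have bdd: "bdd_above ({0} \<union> Q)"
    using M unfolding bdd_above_def by blast
  show "0 \<le> op_norm a b n r \<alpha> T"
    unfolding op_norm using bdd by (intro cSup_upper) auto
  show "op_norm a b n r \<alpha> T \<le> M"
    unfolding op_norm using M quot_le by (intro cSup_least) auto
  fix y :: "'m \<Rightarrow> real \<Rightarrow> complex"
  assume y: "y \<in> vec_Hoelder a b (n + r) \<alpha>"
  show "vec_hnorm a b n \<alpha> (T y) \<le> op_norm a b n r \<alpha> T * vec_hnorm a b (n + r) \<alpha> y"
  proof (cases "vec_hnorm a b (n + r) \<alpha> y = 0")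
    case True
    then show ?thesis using bound[OF y] by simp
  next
    case False
    then have "vec_hnorm a b n \<alpha> (T y) / vec_hnorm a b (n + r) \<alpha> y \<le> op_norm a b n r \<alpha> T"
      unfolding op_norm using y False bdd by (intro cSup_upper) (auto simp: Q_def)
    then show ?thesis
      using False vec_hnorm_nonneg[OF y] by (simp add: divide_le_eq)
  qed
qed

lemma lower_order_op_op_norm:
  assumes B: "\<forall>q<r. B q \<in> mat_Hoelder a b n \<alpha>"
  shows "0 \<le> op_norm a b n r \<alpha> (lower_order_op a b r B)"
    and "op_norm a b n r \<alpha> (lower_order_op a b r B) \<le> mult_const n * embed_const ^ r * (\<Sum>q<r. mat_hnorm a b n \<alpha> (B q))"
    and "y \<in> vec_Hoelder a b (n + r) \<alpha> \<Longrightarrow>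
      vec_hnorm a b n \<alpha> (lower_order_op a b r B y) \<le> op_norm a b n r \<alpha> (lower_order_op a b r B) * vec_hnorm a b (n + r) \<alpha> y"
proof -
  have "0 \<le> (\<Sum>q<r. mat_hnorm a b n \<alpha> (B q))"
    using B by (intro sum_nonneg mat_hnorm_nonneg) auto
  then have "0 \<le> mult_const n * embed_const ^ r * (\<Sum>q<r. mat_hnorm a b n \<alpha> (B q))"
    using mult_const_nonneg embed_const_pow_nonneg by simp
  note op_norm = op_norm_le[OF this conjunct2[OF lower_order_op_bound[OF B]]]
  show "0 \<le> op_norm a b n r \<alpha> (lower_order_op a b r B)"
    and "op_norm a b n r \<alpha> (lower_order_op a b r B) \<le> mult_const n * embed_const ^ r * (\<Sum>q<r. mat_hnorm a b n \<alpha> (B q))"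
    and "y \<in> vec_Hoelder a b (n + r) \<alpha> \<Longrightarrow>
      vec_hnorm a b n \<alpha> (lower_order_op a b r B y) \<le> op_norm a b n r \<alpha> (lower_order_op a b r B) * vec_hnorm a b (n + r) \<alpha> y"
    using op_norm B by auto
qed

lemma lower_order_op_unit_monom:
  assumes "p < r" "t \<in> {a..b}"
  shows "lower_order_op a b r B (unit_monom l p) i t
     = (\<Sum>q<p. B q i l t * monom (of_nat (falling_fact p q)) (p - q) t) + B p i l t * of_nat (falling_fact p p)"
proof -
  define g where "g q = B q i l t * monom (of_nat (falling_fact p q)) (p - q) t" for q
  have column: "(\<Sum>k\<in>UNIV. B q i k t * hder a b q (unit_monom l p k) t) = g q" for q
  proof -
    have "B q i k t * hder a b q (unit_monom l p k) t = (if k = l then g q else 0)" for k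
      using assms(2) by (simp add: unit_monom_def hder_monom g_def monom_def)
    then show ?thesis by simp
  qed
  have "lower_order_op a b r B (unit_monom l p) i t = (\<Sum>q<r. g q)"
    unfolding lower_order_op_def column ..
  also have "\<dots> = (\<Sum>q<Suc p. g q)"
    using assms(1) falling_fact_eq_0_iff by (intro sum.mono_neutral_right) (auto simp: g_def monom_def)
  also have "\<dots> = (\<Sum>q<p. g q) + B p i l t * of_nat (falling_fact p p)"
    by (simp add: g_def monom_def)
  finally show ?thesis
    unfolding g_def .
qed

lemma hnorm_coefficient_le:
  assumes B: "\<forall>q<r. B q \<in> mat_Hoelder a b n \<alpha>" and p: "p < r"
  shows "hnorm a b n \<alpha> (B p i l) \<le> inverse (real (falling_fact p p)) *
    (vec_hnorm a b n \<alpha> (lower_order_op a b r B (unit_monom l p))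
     + (\<Sum>q<p. mult_const n * hnorm a b n \<alpha> (B q i l) * hnorm a b n \<alpha> (monom (of_nat (falling_fact p q)) (p - q))))"
proof -
  define L where "L = lower_order_op a b r B (unit_monom l p) i"
  define S where "S t = (\<Sum>q<p. B q i l t * monom (of_nat (falling_fact p q)) (p - q) t)" for t
  define c :: complex where "c = of_nat (falling_fact p p)"
  have "c \<noteq> 0"
    unfolding c_def using falling_fact_eq_0_iff by simp
  note Ly = conjunct1[OF lower_order_op_bound[OF B unit_monom_vec_Hoelder[of l p]]]
  have L: "L \<in> Hoelder a b n \<alpha>" "hnorm a b n \<alpha> L \<le> vec_hnorm a b n \<alpha> (lower_order_op a b r B (unit_monom l p))"
    using Ly hnorm_le_vec_hnorm[OF Ly] unfolding L_def vec_Hoelder_def by auto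
  have S: "S \<in> Hoelder a b n \<alpha> \<and> hnorm a b n \<alpha> S
      \<le> (\<Sum>q<p. mult_const n * hnorm a b n \<alpha> (B q i l) * hnorm a b n \<alpha> (monom (of_nat (falling_fact p q)) (p - q)))"
    unfolding S_def using B p by (intro Hoelder_sum) (auto intro!: Hoelder_mult monom_Hoelder simp: mat_Hoelder_def)
  note diff = Hoelder_diff[OF L(1) conjunct1[OF S]]
  have eq: "B p i l t = inverse c * (L t - S t)" if "t \<in> {a..b}" for t
  proof -
    have "L t - S t = B p i l t * c"
      using lower_order_op_unit_monom[OF p that, of B l i] unfolding L_def S_def c_def by simp
    then show ?thesis
      using \<open>c \<noteq> 0\<close> by simp
  qed
  have "hnorm a b n \<alpha> (B p i l) = hnorm a b n \<alpha> (\<lambda>t. inverse c * (L t - S t))"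
    using conjunct2[OF Hoelder_cong[OF eq, where n=n]] .
  also have "\<dots> \<le> cmod (inverse c) * hnorm a b n \<alpha> (\<lambda>t. L t - S t)"
    using Hoelder_scale[OF conjunct1[OF diff]] by blast
  also have "\<dots> \<le> cmod (inverse c) * (vec_hnorm a b n \<alpha> (lower_order_op a b r B (unit_monom l p))
      + (\<Sum>q<p. mult_const n * hnorm a b n \<alpha> (B q i l) * hnorm a b n \<alpha> (monom (of_nat (falling_fact p q)) (p - q))))"
    using conjunct2[OF diff] L(2) conjunct2[OF S] by (intro mult_left_mono) auto
  finally show ?thesis
    by (simp add: c_def norm_inverse)
qed

lemma coefficient_tendsto_zero:
  assumes B: "\<forall>\<^sub>F \<epsilon> in F. \<forall>q<r. B \<epsilon> q \<in> mat_Hoelder a b n \<alpha>"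
    and lim: "\<And>y. y \<in> vec_Hoelder a b (n + r) \<alpha> \<Longrightarrow> ((\<lambda>\<epsilon>. vec_hnorm a b n \<alpha> (lower_order_op a b r (B \<epsilon>) y)) \<longlongrightarrow> 0) F"
  shows "p < r \<Longrightarrow> ((\<lambda>\<epsilon>. hnorm a b n \<alpha> (B \<epsilon> p i l)) \<longlongrightarrow> 0) F"
proof (induction p rule: less_induct)
  case (less p)
  define R where "R \<epsilon> = inverse (real (falling_fact p p)) *
    (vec_hnorm a b n \<alpha> (lower_order_op a b r (B \<epsilon>) (unit_monom l p))
     + (\<Sum>q<p. mult_const n * hnorm a b n \<alpha> (B \<epsilon> q i l) * hnorm a b n \<alpha> (monom (of_nat (falling_fact p q)) (p - q))))"
    for \<epsilon>
  have "\<forall>\<^sub>F \<epsilon> in F. norm (hnorm a b n \<alpha> (B \<epsilon> p i l)) \<le> R \<epsilon>"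
    using B
  proof (rule eventually_mono)
    fix \<epsilon> assume B\<epsilon>: "\<forall>q<r. B \<epsilon> q \<in> mat_Hoelder a b n \<alpha>"
    then have "0 \<le> hnorm a b n \<alpha> (B \<epsilon> p i l)"
      using less.prems by (auto intro: hnorm_nonneg simp: mat_Hoelder_def)
    then show "norm (hnorm a b n \<alpha> (B \<epsilon> p i l)) \<le> R \<epsilon>"
      unfolding R_def using hnorm_coefficient_le[OF B\<epsilon> less.prems] by simp
  qed
  moreover have "(R \<longlongrightarrow> 0) F"
    unfolding R_def using lim[OF unit_monom_vec_Hoelder] less
    by (intro tendsto_mult_right_zero tendsto_add_zero tendsto_null_sum tendsto_mult_left_zero) auto
  ultimately show ?case
    by (rule Lim_null_comparison)
qed

lemma lower_order_op_tendsto_iff: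
  fixes B :: "'e \<Rightarrow> nat \<Rightarrow> 'm::finite \<Rightarrow> 'm \<Rightarrow> real \<Rightarrow> complex"
  assumes B: "\<forall>\<^sub>F \<epsilon> in F. \<forall>q<r. B \<epsilon> q \<in> mat_Hoelder a b n \<alpha>"
  shows "(\<forall>q<r. ((\<lambda>\<epsilon>. mat_hnorm a b n \<alpha> (B \<epsilon> q)) \<longlongrightarrow> 0) F)
      \<longleftrightarrow> ((\<lambda>\<epsilon>. op_norm a b n r \<alpha> (lower_order_op a b r (B \<epsilon>))) \<longlongrightarrow> 0) F" (is "?coef \<longleftrightarrow> ?op")
    and "((\<lambda>\<epsilon>. op_norm a b n r \<alpha> (lower_order_op a b r (B \<epsilon>))) \<longlongrightarrow> 0) F
      \<longleftrightarrow> (\<forall>y\<in>vec_Hoelder a b (n + r) \<alpha>. ((\<lambda>\<epsilon>. vec_hnorm a b n \<alpha> (lower_order_op a b r (B \<epsilon>) y)) \<longlongrightarrow> 0) F)"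
      (is "_ \<longleftrightarrow> ?pointwise")
proof -
  have coef_op: ?op if ?coef
  proof -
    have "\<forall>\<^sub>F \<epsilon> in F. norm (op_norm a b n r \<alpha> (lower_order_op a b r (B \<epsilon>)))
        \<le> mult_const n * embed_const ^ r * (\<Sum>q<r. mat_hnorm a b n \<alpha> (B \<epsilon> q))"
      using B by (rule eventually_mono) (simp add: lower_order_op_op_norm(1,2))
    moreover have "((\<lambda>\<epsilon>. mult_const n * embed_const ^ r * (\<Sum>q<r. mat_hnorm a b n \<alpha> (B \<epsilon> q))) \<longlongrightarrow> 0) F"
      using that by (intro tendsto_mult_right_zero tendsto_null_sum) auto
    ultimately show ?thesis
      by (rule Lim_null_comparison)
  qed
  have op_pointwise: ?pointwise if ?op
  proof
    fix y :: "'m \<Rightarrow> real \<Rightarrow> complex"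
    assume y: "y \<in> vec_Hoelder a b (n + r) \<alpha>"
    have "\<forall>\<^sub>F \<epsilon> in F. norm (vec_hnorm a b n \<alpha> (lower_order_op a b r (B \<epsilon>) y))
        \<le> op_norm a b n r \<alpha> (lower_order_op a b r (B \<epsilon>)) * vec_hnorm a b (n + r) \<alpha> y"
      using B by (rule eventually_mono)
        (simp add: y lower_order_op_op_norm(3) vec_hnorm_nonneg lower_order_op_bound)
    moreover have "((\<lambda>\<epsilon>. op_norm a b n r \<alpha> (lower_order_op a b r (B \<epsilon>)) * vec_hnorm a b (n + r) \<alpha> y) \<longlongrightarrow> 0) F"
      using that by (rule tendsto_mult_left_zero)
    ultimately show "((\<lambda>\<epsilon>. vec_hnorm a b n \<alpha> (lower_order_op a b r (B \<epsilon>) y)) \<longlongrightarrow> 0) F"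
      by (rule Lim_null_comparison)
  qed
  have pointwise_coef: ?coef if ?pointwise
    unfolding mat_hnorm_def using coefficient_tendsto_zero[OF B] that by (auto intro!: tendsto_null_sum)
  show "?coef \<longleftrightarrow> ?op" "?op \<longleftrightarrow> ?pointwise"
    using coef_op op_pointwise pointwise_coef by blast+
qed

end

theorem theorem2:
  fixes a b \<alpha> \<epsilon>0 :: real and r n :: nat
    and A :: "nat \<Rightarrow> real \<Rightarrow> 'm::finite \<Rightarrow> 'm \<Rightarrow> real \<Rightarrow> complex"
  assumes "a < b" and "r \<ge> 2" and "0 < \<alpha>" and "\<alpha> \<le> 1" and "\<epsilon>0 > 0"
    and "\<And>\<epsilon> j. \<epsilon> \<in> {0..<\<epsilon>0} \<Longrightarrow> j \<in> {1..r} \<Longrightarrow> A (r - j) \<epsilon> \<in> mat_Hoelder a b n \<alpha>"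
  shows "((\<forall>j\<in>{1..r}. ((\<lambda>\<epsilon>. mat_hnorm a b n \<alpha> (\<lambda>i k t. A (r - j) \<epsilon> i k t - A (r - j) 0 i k t))
               \<longlongrightarrow> 0) (at_right 0))
          \<longleftrightarrow> ((\<lambda>\<epsilon>. op_norm a b n r \<alpha> (\<lambda>y. \<lambda>i t. diff_op a b r (\<lambda>p. A p \<epsilon>) y i t - diff_op a b r (\<lambda>p. A p 0) y i t))
               \<longlongrightarrow> 0) (at_right 0))
       \<and> (((\<lambda>\<epsilon>. op_norm a b n r \<alpha> (\<lambda>y. \<lambda>i t. diff_op a b r (\<lambda>p. A p \<epsilon>) y i t - diff_op a b r (\<lambda>p. A p 0) y i t))
               \<longlongrightarrow> 0) (at_right 0)
          \<longleftrightarrow> (\<forall>y\<in>vec_Hoelder a b (n + r) \<alpha>.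
                ((\<lambda>\<epsilon>. vec_hnorm a b n \<alpha> (\<lambda>i t. diff_op a b r (\<lambda>p. A p \<epsilon>) y i t - diff_op a b r (\<lambda>p. A p 0) y i t))
                  \<longlongrightarrow> 0) (at_right 0)))"
proof -
  interpret hoelder_interval a b \<alpha>
    using assms by unfold_locales auto
  have A: "A q \<epsilon> \<in> mat_Hoelder a b n \<alpha>" if "\<epsilon> \<in> {0..<\<epsilon>0}" "q < r" for \<epsilon> q
    using assms(6)[OF that(1)] ball_atLeast1_atMost_diff_iff[of r "\<lambda>q. A q \<epsilon> \<in> mat_Hoelder a b n \<alpha>"] that(2)
    by blast
  have "\<forall>\<^sub>F \<epsilon> in at_right 0. \<forall>q<r. (\<lambda>i k t. A q \<epsilon> i k t - A q 0 i k t) \<in> mat_Hoelder a b n \<alpha>"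
    using eventually_at_right_real[OF assms(5)]
    by (rule eventually_mono) (use A assms(5) Hoelder_diff in \<open>auto simp: mat_Hoelder_def\<close>)
  from lower_order_op_tendsto_iff[OF this] show ?thesis
    unfolding diff_op_minus ball_atLeast1_atMost_diff_iff[where
        P = "\<lambda>q. ((\<lambda>\<epsilon>. mat_hnorm a b n \<alpha> (\<lambda>i k t. A q \<epsilon> i k t - A q 0 i k t)) \<longlongrightarrow> 0) (at_right 0)"]
    by blast
qed

end
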